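(* Let $\mathcal{H}$ be a real $m^{\rm th}$-order $n$-dimensional Hankel tensor generated by ${\bf h}\in\mathbb{R}^{m(n-1)+1}$, where $m(n-1)$ is even, and let $r$ be the rank of its associated Hankel matrix $H$. Then $\mathcal{H}$ is a strong Hankel tensor if and only if either it admits a Vandermonde decomposition with all positive coefficients $$\mathcal{H}=\sum_{k=1}^r\alpha_k{\bf v}_k^{\circ m},\quad \alpha_k>0,\quad {\bf v}_k=(1,\xi_k,\dots,\xi_k^{n-1})^\top,\ \xi_k\in\mathbb{R},$$ or it admits an augmented Vandermonde decomposition with all positive coefficients $$\mathcal{H}=\sum_{k=1}^{r-1}\alpha_k{\bf v}_k^{\circ m}+\alpha_r{\bf e}_n^{\circ m},\quad \alpha_k>0,\quad {\bf v}_k=(1,\xi_k,\dots,\xi_k^{n-1})^\top,\ \xi_k\in\mathbb{R}.$$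
   Context: The Hankel tensor generated by ${\bf h}=(h_0,\dots,h_{m(n-1)})$ has entries $\mathcal{H}_{i_1\dots i_m}=h_{i_1+\dots+i_m}$, $0\le i_j\le n-1$. Its associated Hankel matrix is the square Hankel matrix $H$ of size $\frac{m(n-1)}{2}+1$ with $H_{ij}=h_{i+j}$ ($0\le i,j\le m(n-1)/2$). $\mathcal{H}$ is a strong Hankel tensor if $H$ is positive semi-definite. ${\bf v}^{\circ m}$ is the rank-one tensor with entries $v_{i_1}v_{i_2}\cdots v_{i_m}$, and ${\bf e}_n=(0,\dots,0,1)^\top\in\mathbb{R}^n$. *)

theory Defs
  imports "Jordan_Normal_Form.DL_Rank"
begin

text \<open>Index tuples of an m-th order n-dimensional tensor: functions
  i with i j < n for all j < m (0-based). Tensors are functions on index tuples.\<close>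

definition tensor_idx :: "nat \<Rightarrow> nat \<Rightarrow> (nat \<Rightarrow> nat) set" where
  "tensor_idx m n = {i. \<forall>j<m. i j < n}"

definition hankel_tensor :: "nat \<Rightarrow> (nat \<Rightarrow> real) \<Rightarrow> (nat \<Rightarrow> nat) \<Rightarrow> real" where
  "hankel_tensor m h i = h (\<Sum>j<m. i j)"

definition rank1_tensor :: "nat \<Rightarrow> (nat \<Rightarrow> real) \<Rightarrow> (nat \<Rightarrow> nat) \<Rightarrow> real" where
  "rank1_tensor m v i = (\<Prod>j<m. v (i j))"

definition vand_vec :: "real \<Rightarrow> nat \<Rightarrow> real" where
  "vand_vec \<xi> k = \<xi> ^ k"

definition e_last :: "nat \<Rightarrow> nat \<Rightarrow> real" where
  "e_last n k = (if k = n - 1 then 1 else 0)"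

definition hankel_size :: "nat \<Rightarrow> nat \<Rightarrow> nat" where
  "hankel_size m n = m * (n - 1) div 2 + 1"

definition hankel_matrix :: "nat \<Rightarrow> nat \<Rightarrow> (nat \<Rightarrow> real) \<Rightarrow> real mat" where
  "hankel_matrix m n h = mat (hankel_size m n) (hankel_size m n) (\<lambda>(i, j). h (i + j))"

definition psd_mat :: "real mat \<Rightarrow> bool" where
  "psd_mat A \<longleftrightarrow> A \<in> carrier_mat (dim_row A) (dim_row A) \<and> A\<^sup>T = A \<and>
     (\<forall>x \<in> carrier_vec (dim_row A). x \<bullet> (A *\<^sub>v x) \<ge> 0)"

definition strong_hankel :: "nat \<Rightarrow> nat \<Rightarrow> (nat \<Rightarrow> real) \<Rightarrow> bool" where
  "strong_hankel m n h \<longleftrightarrow> psd_mat (hankel_matrix m n h)"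

definition mat_rank :: "real mat \<Rightarrow> nat" where
  "mat_rank A = vec_space.rank (dim_row A) A"

end

theory Submission
  imports Defs "HOL-Computational_Algebra.Fundamental_Theorem_Algebra"
begin

text \<open>
  Let \<open>2p = m(n - 1)\<close>. The associated Hankel matrix is the Gram matrix of the Riesz functional
  \<open>L f = \<Sum>\<^sub>i f\<^sub>i h\<^sub>i\<close> on polynomials of degree \<open>\<le> p\<close>, so the tensor is strong iff \<open>L (w\<^sup>2) \<ge> 0\<close>
  for \<open>degree w \<le> p\<close>. Every entry of the tensor is some \<open>h\<^sub>t\<close> and every \<open>t \<le> 2p\<close> occurs, so a
  decomposition of the tensor is the same as one of the moments \<open>h\<^sub>t = \<Sum>\<^sub>k \<alpha>\<^sub>k \<xi>\<^sub>k\<^sup>t (+ \<alpha>\<^sub>r [t = 2p])\<close>.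

  If the matrix is singular, let \<open>q\<close> be a monic kernel polynomial of least degree. By Cauchy-Schwarz
  the kernel is stable under multiplication by \<open>X\<close> as far as degrees allow, which rules out a
  factor \<open>(X - a)\<^sup>2 + b\<^sup>2\<close> of \<open>q\<close>: so \<open>q\<close> has \<open>degree q\<close> distinct real roots. Lagrange interpolation
  at these roots is then a Gauss quadrature rule for \<open>L\<close>, exact below degree \<open>2p\<close>, with positive
  weights; the defect at \<open>h\<^sub>2\<^sub>p\<close> is nonnegative and becomes the coefficient of \<open>e\<^sub>n\<^sup>\<circ>\<^sup>m\<close>. A positive
  definite matrix is first bordered by one more moment so that it acquires a kernel. The rank is the
  number of nodes, plus one if the defect is nonzero. Conversely, any such decomposition with
  positive weights writes \<open>L (w\<^sup>2)\<close> as a nonnegative combination of squares.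
\<close>

section \<open>Real polynomials whose roots are real and simple\<close>

lemma map_poly_of_real_add:
  "map_poly (of_real :: real \<Rightarrow> 'a::{real_algebra_1,comm_ring_1}) (p + q) = map_poly of_real p + map_poly of_real q"
  by (intro poly_eqI) (simp add: coeff_map_poly)

lemma map_poly_of_real_mult:
  "map_poly (of_real :: real \<Rightarrow> 'a::{real_algebra_1,comm_ring_1}) (p * q) = map_poly of_real p * map_poly of_real q"
  by (intro poly_eqI) (simp add: coeff_map_poly coeff_mult)

lemma poly_map_poly_of_real:
  "poly (map_poly (of_real :: real \<Rightarrow> 'a::{real_algebra_1,comm_ring_1}) p) (of_real x) = of_real (poly p x)"
  by (induction p) (simp_all add: map_poly_pCons)

lemma real_quadratic_dvd_of_complex_root:
  fixes q :: "real poly"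
  assumes "Im z \<noteq> 0" and "poly (map_poly complex_of_real q) z = 0"
  shows "[:Re z * Re z + Im z * Im z, -2 * Re z, 1:] dvd q"
proof -
  define Q where "Q = [:Re z * Re z + Im z * Im z, -2 * Re z, 1:]"
  define \<rho> where "\<rho> = q mod Q"
  have Q_root: "poly (map_poly complex_of_real Q) z = 0"
    by (simp add: Q_def map_poly_pCons complex_eq_iff algebra_simps)
  have "q = (q div Q) * Q + \<rho>"
    unfolding \<rho>_def by simp
  then have \<rho>_root: "poly (map_poly complex_of_real \<rho>) z = 0"
    using assms(2) Q_root
    by (metis add_0 map_poly_of_real_add map_poly_of_real_mult mult_zero_right poly_add poly_mult)
  have "degree \<rho> < 2"
    using degree_mod_less[of Q q] by (auto simp: Q_def \<rho>_def)
  then have \<rho>_lin: "\<rho> = [:coeff \<rho> 0, coeff \<rho> 1:]"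
    by (intro poly_eqI) (auto simp: coeff_pCons coeff_eq_0 split: nat.splits)
  have "of_real (coeff \<rho> 0) + z * of_real (coeff \<rho> 1) = 0"
    using \<rho>_root by (subst (asm) \<rho>_lin) (simp add: map_poly_pCons)
  then have "coeff \<rho> 1 = 0" "coeff \<rho> 0 = 0"
    using assms(1) by (auto simp: complex_eq_iff)
  then have "\<rho> = 0"
    using \<rho>_lin by simp
  then show ?thesis
    unfolding Q_def \<rho>_def by (simp add: mod_eq_0_iff_dvd)
qed

lemma real_root_if_no_quadratic_dvd:
  fixes q :: "real poly"
  assumes "\<And>a b. \<not> [:a * a + b * b, -2 * a, 1:] dvd q" "degree q > 0"
  obtains a where "poly q a = 0"
proof -
  have "\<not> constant (poly (map_poly complex_of_real q))"
    using assms(2) by (subst constant_degree) (simp add: degree_map_poly)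
  then obtain z where z: "poly (map_poly complex_of_real q) z = 0"
    using fundamental_theorem_of_algebra by blast
  have "Im z = 0"
    using real_quadratic_dvd_of_complex_root[OF _ z] assms(1) by blast
  then have "z = of_real (Re z)"
    by (simp add: complex_eq_iff)
  then have "poly q (Re z) = 0"
    using z poly_map_poly_of_real[where 'a = complex, of q "Re z"] by simp
  then show ?thesis
    by (rule that)
qed

text \<open>A double real root \<open>a\<close> is the case \<open>b = 0\<close> of the excluded divisors \<open>(X - a)\<^sup>2 + b\<^sup>2\<close>.\<close>
lemma card_roots_eq_degree_if_no_quadratic_dvd:
  fixes q :: "real poly"
  assumes "\<And>a b. \<not> [:a * a + b * b, -2 * a, 1:] dvd q"
  shows "card {x. poly q x = 0} = degree q"
  using assms
proof (induction "degree q" arbitrary: q)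
  case 0
  then obtain c where "q = [:c:]"
    by (metis degree_eq_zeroE)
  moreover have "c \<noteq> 0"
    using 0(2)[of 0 0] calculation by auto
  ultimately show ?case
    by simp
next
  case (Suc d)
  then obtain a where "poly q a = 0"
    by (metis real_root_if_no_quadratic_dvd zero_less_Suc)
  then obtain g where g: "q = [:- a, 1:] * g"
    by (metis dvdE poly_eq_0_iff_dvd)
  have g_nz: "g \<noteq> 0"
    using g Suc(2) by auto
  have "degree q = degree g + 1"
    unfolding g using g_nz by (subst degree_mult_eq) auto
  then have dg: "d = degree g"
    using Suc(2) by simp
  have no_dvd_g: "\<not> [:a * a + b * b, -2 * a, 1:] dvd g" for a b
    using Suc(3)[of a b] g by (metis dvd_mult)
  have "poly g a \<noteq> 0"
  proof
    assume "poly g a = 0"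
    then obtain k where "g = [:- a, 1:] * k"
      by (metis dvdE poly_eq_0_iff_dvd)
    moreover have "[:a * a + 0 * 0, -2 * a, 1:] = [:- a, 1:] * [:- a, 1:]"
      by simp
    ultimately have "[:a * a + 0 * 0, -2 * a, 1:] dvd q"
      using g by (metis dvd_triv_left mult.assoc)
    with Suc(3) show False
      by blast
  qed
  moreover have "{x. poly q x = 0} = insert a {x. poly g x = 0}"
    using g by auto
  moreover have "finite {x. poly g x = 0}"
    using g_nz by (rule poly_roots_finite)
  ultimately show ?case
    using Suc(1)[OF dg no_dvd_g] Suc(2) dg by simp
qed

section \<open>The Riesz functional of a sequence\<close>

definition riesz :: "(nat \<Rightarrow> real) \<Rightarrow> real poly \<Rightarrow> real" where
  "riesz h f = (\<Sum>i\<le>degree f. coeff f i * h i)"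

lemma riesz_altdef: "degree f \<le> B \<Longrightarrow> riesz h f = (\<Sum>i\<le>B. coeff f i * h i)"
  unfolding riesz_def by (rule sum.mono_neutral_left) (auto simp: coeff_eq_0)

lemma riesz_add: "riesz h (f + g) = riesz h f + riesz h g"
proof -
  define B where "B = max (degree f) (degree g)"
  have "degree (f + g) \<le> B"
    unfolding B_def by (rule degree_add_le) auto
  then show ?thesis
    using riesz_altdef[of f B h] riesz_altdef[of g B h] riesz_altdef[of "f + g" B h]
    by (simp add: B_def sum.distrib algebra_simps)
qed

lemma riesz_smult: "riesz h (smult c f) = c * riesz h f"
  using riesz_altdef[of "smult c f" "degree f" h] riesz_altdef[of f "degree f" h]
  by (simp add: sum_distrib_left algebra_simps)

lemma riesz_diff: "riesz h (f - g) = riesz h f - riesz h g"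
  using riesz_add[of h f "- g"] riesz_smult[of h "- 1" g] by simp

lemma riesz_0 [simp]: "riesz h 0 = 0"
  by (simp add: riesz_def)

lemma riesz_sum: "riesz h (\<Sum>a\<in>A. F a) = (\<Sum>a\<in>A. riesz h (F a))"
  by (induction A rule: infinite_finite_induct) (simp_all add: riesz_add)

lemma riesz_monom: "riesz h (monom c k) = c * h k"
proof -
  have "riesz h (monom c k) = (\<Sum>i\<le>k. coeff (monom c k) i * h i)"
    by (rule riesz_altdef) (simp add: degree_monom_le)
  also have "\<dots> = (\<Sum>i\<in>{k}. coeff (monom c k) i * h i)"
    by (rule sum.mono_neutral_right) auto
  finally show ?thesis
    by simp
qed

lemma riesz_cong: "degree f \<le> B \<Longrightarrow> (\<And>t. t \<le> B \<Longrightarrow> h t = h' t) \<Longrightarrow> riesz h f = riesz h' f"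
  using riesz_altdef[of f B h] riesz_altdef[of f B h'] by simp

lemma riesz_mult_eq_0_if_monoms:
  assumes "\<And>j. j \<le> B \<Longrightarrow> riesz h (w * monom 1 j) = 0" and "degree g \<le> B"
  shows "riesz h (w * g) = 0"
proof -
  have "w * g = (\<Sum>j\<le>B. smult (coeff g j) (w * monom 1 j))"
    by (subst poly_as_sum_of_monoms'[OF assms(2), symmetric])
       (simp add: sum_distrib_left smult_monom mult_smult_right[symmetric])
  then show ?thesis
    using assms(1) by (simp add: riesz_sum riesz_smult)
qed

text \<open>
  With \<open>H\<close> the Hankel matrix of size \<open>p + 1\<close>, a polynomial \<open>w\<close> of degree at most \<open>p\<close>
  stands for its coefficient vector \<open>x\<close>, and \<open>riesz h (w * w) = x \<bullet> (H *\<^sub>v x)\<close>.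
\<close>
definition hankel_psd :: "nat \<Rightarrow> (nat \<Rightarrow> real) \<Rightarrow> bool" where
  "hankel_psd p h \<longleftrightarrow> (\<forall>w. degree w \<le> p \<longrightarrow> riesz h (w * w) \<ge> 0)"

definition hankel_kernel :: "nat \<Rightarrow> (nat \<Rightarrow> real) \<Rightarrow> real poly \<Rightarrow> bool" where
  "hankel_kernel p h w \<longleftrightarrow> degree w \<le> p \<and> (\<forall>j\<le>p. riesz h (w * monom 1 j) = 0)"

lemma riesz_kernel_mult: "hankel_kernel p h w \<Longrightarrow> degree g \<le> p \<Longrightarrow> riesz h (w * g) = 0"
  unfolding hankel_kernel_def by (blast intro: riesz_mult_eq_0_if_monoms)

lemma hankel_kernel_smult: "hankel_kernel p h w \<Longrightarrow> hankel_kernel p h (smult c w)"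
  by (simp add: hankel_kernel_def riesz_smult)

lemma linear_coeff_eq_0_if_quadratic_nonneg:
  fixes a b :: real
  assumes "\<And>t. a * t + b * t * t \<ge> 0" and "b \<ge> 0"
  shows "a = 0"
proof (rule ccontr)
  assume "a \<noteq> 0"
  define t where "t = - a / (b + 1)"
  have "a + b * t = a / (b + 1)"
    using assms(2) unfolding t_def by (simp add: field_simps)
  have "a * t + b * t * t = t * (a + b * t)"
    by (simp add: algebra_simps)
  also have "\<dots> = t * (a / (b + 1))"
    unfolding \<open>a + b * t = a / (b + 1)\<close> ..
  also have "\<dots> = - (a * a) / ((b + 1) * (b + 1))"
    unfolding t_def by simp
  also have "\<dots> < 0"
    using \<open>a \<noteq> 0\<close> assms(2) by (intro divide_neg_pos) (auto simp: zero_less_mult_iff)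
  finally show False
    using assms(1)[of t] by simp
qed

lemma riesz_mult_eq_0_if_sq_eq_0:
  assumes "hankel_psd p h" "degree w \<le> p" "degree u \<le> p" "riesz h (w * w) = 0"
  shows "riesz h (w * u) = 0"
proof -
  have "2 * riesz h (w * u) * t + riesz h (u * u) * t * t \<ge> 0" for t
  proof -
    have sq: "(w + smult t u) * (w + smult t u) = w * w + smult t (w * u) + smult t (w * u) + smult (t * t) (u * u)"
      by (simp add: algebra_simps)
    have "riesz h ((w + smult t u) * (w + smult t u)) = 2 * riesz h (w * u) * t + riesz h (u * u) * t * t"
      unfolding sq riesz_add riesz_smult using assms(4) by (simp add: algebra_simps)
    moreover have "degree (w + smult t u) \<le> p"
      using assms(2,3) by (simp add: degree_add_le)
    ultimately show ?thesis
      using assms(1) unfolding hankel_psd_def by metis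
  qed
  moreover have "riesz h (u * u) \<ge> 0"
    using assms(1,3) hankel_psd_def by blast
  ultimately show ?thesis
    using linear_coeff_eq_0_if_quadratic_nonneg[of "2 * riesz h (w * u)" "riesz h (u * u)"] by simp
qed

lemma hankel_kernelI:
  assumes "hankel_psd p h" "degree w \<le> p" "riesz h (w * w) = 0"
  shows "hankel_kernel p h w"
  using assms riesz_mult_eq_0_if_sq_eq_0[OF assms(1,2) _ assms(3), of "monom 1 _"]
  unfolding hankel_kernel_def by (simp add: degree_monom_eq)

lemma hankel_kernel_monom_mult:
  assumes "hankel_psd p h" "hankel_kernel p h q" "j + degree q < p"
  shows "hankel_kernel p h (monom 1 j * q)"
  using assms(3)
proof (induction j)
  case 0
  then show ?case
    using assms(2) by simp
next
  case (Suc j)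
  let ?w = "monom 1 j * q"
  have deg: "degree (monom 1 i * q) \<le> i + degree q" for i
    by (rule order.trans[OF degree_mult_le]) (simp add: degree_monom_eq)
  have "(monom 1 (Suc j) * q) * (monom 1 (Suc j) * q) = ?w * (monom 1 (j + 2) * q)"
    by (simp add: algebra_simps mult_monom)
  also have "riesz h \<dots> = 0"
    using Suc deg[of "j + 2"] by (intro riesz_kernel_mult[of p]) simp_all
  finally show ?case
    using Suc deg[of "Suc j"] by (intro hankel_kernelI[OF assms(1)]) simp_all
qed

lemma riesz_kernel_mult_high:
  assumes "hankel_psd p h" "hankel_kernel p h q" "degree g + degree q < 2 * p"
  shows "riesz h (q * g) = 0"
proof (rule riesz_mult_eq_0_if_monoms)
  fix t assume "t \<le> 2 * p - 1 - degree q"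
  show "riesz h (q * monom 1 t) = 0"
  proof (cases "t \<le> p")
    case True
    then show ?thesis
      using assms(2) hankel_kernel_def by blast
  next
    case False
    have "hankel_kernel p h (monom 1 (t - p) * q)"
      using False \<open>t \<le> 2 * p - 1 - degree q\<close> by (intro hankel_kernel_monom_mult[OF assms(1,2)]) simp
    then have "riesz h ((monom 1 (t - p) * q) * monom 1 p) = 0"
      unfolding hankel_kernel_def by blast
    moreover have "(monom 1 (t - p) * q) * monom 1 p = q * monom 1 t"
      using False by (simp add: algebra_simps mult_monom)
    ultimately show ?thesis
      by simp
  qed
qed (use assms(3) in linarith)

section \<open>Lagrange interpolation\<close>

lemma degree_div_mult_le: "degree (f div q * q) \<le> degree f"
  for f q :: "'a::field poly"
proof (cases "f div q = 0 \<or> f mod q = 0")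
  case True
  then show ?thesis
  proof
    assume "f mod q = 0"
    then show ?thesis
      using div_mult_mod_eq[of f q] by simp
  qed simp
next
  case False
  then have "q \<noteq> 0"
    by auto
  then have "degree (f mod q) < degree q"
    using False by (intro degree_mod_less') simp_all
  also have "degree q \<le> degree (f div q * q)"
    using False \<open>q \<noteq> 0\<close> by (simp add: degree_mult_eq)
  finally have "degree (f div q * q + f mod q) = degree (f div q * q)"
    by (rule degree_add_eq_left)
  then show ?thesis
    by simp
qed

definition lagrange_basis :: "'a::field set \<Rightarrow> 'a \<Rightarrow> 'a poly" where
  "lagrange_basis S a = smult (1 / (\<Prod>b\<in>S - {a}. a - b)) (\<Prod>b\<in>S - {a}. [:- b, 1:])"

lemma poly_lagrange_basis:
  assumes "finite S" "a \<in> S" "c \<in> S"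
  shows "poly (lagrange_basis S a) c = (if c = a then 1 else 0)"
proof -
  have "(\<Prod>b\<in>S - {a}. c - b) = 0" if "c \<noteq> a"
    using assms that by (intro prod_zero) auto
  then show ?thesis
    using assms(1) by (auto simp: lagrange_basis_def poly_prod)
qed

lemma degree_lagrange_basis:
  assumes "finite S" "a \<in> S"
  shows "degree (lagrange_basis S a) < card S"
proof -
  have "degree (\<Prod>b\<in>S - {a}. [:- b, 1:]) \<le> (\<Sum>b\<in>S - {a}. degree [:- b, 1:])"
    using degree_prod_sum_le[of "S - {a}" "\<lambda>b. [:- b, 1:]"] assms(1) by (simp add: o_def)
  also have "\<dots> < card S"
    using assms card_gt_0_iff[of S] by auto
  finally show ?thesis
    unfolding lagrange_basis_def by (meson degree_smult_le le_less_trans)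
qed

lemma lagrange_interpolation:
  assumes "finite S" "degree f < card S"
  shows "f = (\<Sum>a\<in>S. smult (poly f a) (lagrange_basis S a))"
proof -
  define D where "D = f - (\<Sum>a\<in>S. smult (poly f a) (lagrange_basis S a))"
  have "degree (\<Sum>a\<in>S. smult (poly f a) (lagrange_basis S a)) < card S"
    using degree_lagrange_basis[OF assms(1)] assms
    by (intro degree_sum_less) (auto intro: le_less_trans[OF degree_smult_le])
  then have "degree D < card S"
    unfolding D_def using assms(2) by (meson degree_diff_le_max le_less_trans max_less_iff_conj)
  have "S \<subseteq> {x. poly D x = 0}"
  proof
    fix c assume "c \<in> S"
    have "(\<Sum>a\<in>S. poly f a * poly (lagrange_basis S a) c) = (\<Sum>a\<in>S. if a = c then poly f a else 0)"
      using assms(1) \<open>c \<in> S\<close> by (intro sum.cong) (auto simp: poly_lagrange_basis)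
    also have "\<dots> = poly f c"
      using assms(1) \<open>c \<in> S\<close> by simp
    finally show "c \<in> {x. poly D x = 0}"
      by (simp add: D_def poly_sum)
  qed
  have "D = 0"
  proof (rule ccontr)
    assume "D \<noteq> 0"
    then have "card S \<le> card {x. poly D x = 0}"
      using \<open>S \<subseteq> {x. poly D x = 0}\<close> by (intro card_mono poly_roots_finite)
    also have "\<dots> \<le> degree D"
      using \<open>D \<noteq> 0\<close> by (rule card_poly_roots_bound)
    finally show False
      using \<open>degree D < card S\<close> by simp
  qed
  then show ?thesis
    by (simp add: D_def)
qed

section \<open>Minimal kernel polynomials and Gauss quadrature\<close>

locale hankel_min_kernel =
  fixes p :: nat and h :: "nat \<Rightarrow> real" and q :: "real poly"
  assumes psd: "hankel_psd p h" and p_pos: "1 \<le> p"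
    and kernel: "hankel_kernel p h q" and monic: "lead_coeff q = 1"
    and minimal: "\<And>w. hankel_kernel p h w \<Longrightarrow> w \<noteq> 0 \<Longrightarrow> degree q \<le> degree w"
begin

lemma q_nonzero: "q \<noteq> 0"
  using monic by auto

lemma degree_q_le: "degree q \<le> p"
  using kernel hankel_kernel_def by blast

text \<open>
  If \<open>q = ((X - a)\<^sup>2 + b\<^sup>2) g\<close>, then \<open>q g = u\<^sup>2 + b\<^sup>2 g\<^sup>2\<close> with \<open>u = (X - a) g\<close>, so \<open>riesz h (u\<^sup>2) = 0\<close>
  and \<open>u\<close> would be a kernel element of smaller degree than \<open>q\<close>.
\<close>
lemma no_quadratic_dvd: "\<not> [:a * a + b * b, -2 * a, 1:] dvd q"
proof
  assume "[:a * a + b * b, -2 * a, 1:] dvd q"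
  then obtain g where g: "q = [:a * a + b * b, -2 * a, 1:] * g"
    by (elim dvdE)
  define u where "u = [:- a, 1:] * g"
  have "g \<noteq> 0"
    using g q_nonzero by auto
  then have dq: "degree q = degree g + 2" and du: "degree u = degree g + 1"
    unfolding g u_def by (subst degree_mult_eq; simp)+
  have ring_id: "(Q * g) * g = (x * g) * (x * g) + c * (g * g)" if "Q = x * x + c" for Q x c :: "real poly"
    unfolding that by (simp add: algebra_simps)
  have "q * g = u * u + [:b * b:] * (g * g)"
    unfolding g u_def by (rule ring_id) simp
  moreover have "riesz h (q * g) = 0"
    using kernel dq degree_q_le by (intro riesz_kernel_mult[of p]) auto
  moreover have "riesz h (u * u) \<ge> 0" "riesz h (g * g) \<ge> 0"
    using psd du dq degree_q_le unfolding hankel_psd_def by auto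
  ultimately have "riesz h (u * u) = 0"
    by (simp add: riesz_add riesz_smult) (smt (verit) zero_le_square mult_nonneg_nonneg)
  then have "hankel_kernel p h u"
    using psd du dq degree_q_le by (intro hankel_kernelI) auto
  moreover have "u \<noteq> 0"
    using du by auto
  ultimately show False
    using minimal du dq by fastforce
qed

definition nodes :: "real set" where
  "nodes = {x. poly q x = 0}"

lemma finite_nodes: "finite nodes"
  unfolding nodes_def using q_nonzero by (rule poly_roots_finite)

lemma card_nodes: "card nodes = degree q"
  unfolding nodes_def using no_quadratic_dvd by (rule card_roots_eq_degree_if_no_quadratic_dvd)

definition weight :: "real \<Rightarrow> real" where
  "weight a = riesz h (lagrange_basis nodes a)"

lemma riesz_eq_quadrature:
  assumes "degree f < 2 * p"
  shows "riesz h f = (\<Sum>a\<in>nodes. weight a * poly f a)"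
proof -
  define \<rho> where "\<rho> = f mod q"
  have "riesz h (q * (f div q)) = 0"
  proof (cases "f div q = 0")
    case False
    then have "degree (f div q) + degree q \<le> degree f"
      using degree_div_mult_le[of f q] q_nonzero by (simp add: degree_mult_eq)
    then show ?thesis
      using assms by (intro riesz_kernel_mult_high[OF psd kernel]) simp
  qed simp
  then have "riesz h f = riesz h \<rho>"
    using div_mult_mod_eq[of f q] by (metis \<rho>_def riesz_add mult.commute add_0)
  also have "\<dots> = (\<Sum>a\<in>nodes. weight a * poly \<rho> a)"
  proof (cases "\<rho> = 0")
    case False
    then have "degree \<rho> < card nodes"
      using degree_mod_less'[OF q_nonzero] card_nodes unfolding \<rho>_def by simp
    then have "riesz h \<rho> = riesz h (\<Sum>a\<in>nodes. smult (poly \<rho> a) (lagrange_basis nodes a))"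
      using lagrange_interpolation[OF finite_nodes] by metis
    then show ?thesis
      by (simp add: riesz_sum riesz_smult weight_def mult.commute)
  qed simp
  also have "\<dots> = (\<Sum>a\<in>nodes. weight a * poly f a)"
    using div_mult_mod_eq[of f q] by (intro sum.cong) (auto simp: \<rho>_def nodes_def poly_mod)
  finally show ?thesis .
qed

lemma weight_pos:
  assumes "a \<in> nodes"
  shows "weight a > 0"
proof -
  let ?l = "lagrange_basis nodes a"
  have deg: "degree ?l < degree q"
    using degree_lagrange_basis[OF finite_nodes assms] card_nodes by simp
  then have "degree (?l * ?l) < 2 * p"
    using degree_mult_le[of ?l ?l] degree_q_le by linarith
  then have "riesz h (?l * ?l) = (\<Sum>b\<in>nodes. weight b * poly (?l * ?l) b)"
    by (rule riesz_eq_quadrature)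
  also have "\<dots> = (\<Sum>b\<in>nodes. if b = a then weight b else 0)"
    using poly_lagrange_basis[OF finite_nodes assms] by (intro sum.cong) auto
  also have "\<dots> = weight a"
    using finite_nodes assms by simp
  finally have sq: "riesz h (?l * ?l) = weight a" .
  have "weight a \<ge> 0"
    using psd deg degree_q_le unfolding sq[symmetric] hankel_psd_def by auto
  moreover have "weight a \<noteq> 0"
  proof
    assume "weight a = 0"
    then have "hankel_kernel p h ?l"
      using sq deg degree_q_le by (intro hankel_kernelI[OF psd]) auto
    moreover have "?l \<noteq> 0"
      using poly_lagrange_basis[OF finite_nodes assms assms] by auto
    ultimately show False
      using minimal deg by fastforce
  qed
  ultimately show ?thesis
    by simp
qed

text \<open>
  \<open>top_poly\<close> is monic of degree \<open>p\<close> and vanishes on the nodes, so \<open>top_weight\<close> measures by how much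
  \<open>h (2 * p)\<close> exceeds its quadrature value.
\<close>
definition top_poly :: "real poly" where
  "top_poly = monom 1 (p - degree q) * q"

definition top_weight :: real where
  "top_weight = riesz h (top_poly * top_poly)"

lemma degree_top_poly: "degree top_poly = p"
proof -
  have "degree (monom (1::real) (p - degree q)) = p - degree q"
    by (rule degree_monom_eq) simp
  then show ?thesis
    unfolding top_poly_def using degree_q_le q_nonzero by (subst degree_mult_eq) auto
qed

lemma lead_coeff_top_poly: "lead_coeff top_poly = 1"
  unfolding top_poly_def by (simp only: lead_coeff_mult lead_coeff_monom monic mult_1)

lemma poly_top_poly_nodes: "a \<in> nodes \<Longrightarrow> poly top_poly a = 0"
  unfolding top_poly_def nodes_def by simp

lemma top_weight_nonneg: "top_weight \<ge> 0"
  using psd degree_top_poly unfolding top_weight_def hankel_psd_def by auto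

lemma top_weight_eq_0: "degree q = p \<Longrightarrow> top_weight = 0"
  unfolding top_weight_def top_poly_def using riesz_kernel_mult[OF kernel, of q] degree_q_le by simp

lemma riesz_eq_quadrature_top:
  assumes "degree f \<le> 2 * p"
  shows "riesz h f = (\<Sum>a\<in>nodes. weight a * poly f a) + top_weight * coeff f (2 * p)"
proof -
  define c where "c = coeff f (2 * p)"
  define r where "r = f - smult c (top_poly * top_poly)"
  have deg_sq: "degree (top_poly * top_poly) = 2 * p"
    using degree_top_poly lead_coeff_top_poly by (subst degree_mult_eq) auto
  have "coeff (top_poly * top_poly) (2 * p) = 1"
    using deg_sq lead_coeff_mult[of top_poly top_poly] lead_coeff_top_poly by simp
  then have "coeff r (2 * p) = 0"
    unfolding r_def c_def by simp
  moreover have "degree r \<le> 2 * p"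
    unfolding r_def using assms deg_sq
    by (intro degree_diff_le) (auto intro: order.trans[OF degree_smult_le])
  ultimately have "degree r < 2 * p"
  proof (cases "degree r = 2 * p")
    case True
    then have "r = 0"
      using \<open>coeff r (2 * p) = 0\<close> by (metis leading_coeff_0_iff)
    then show ?thesis
      using p_pos by simp
  qed simp
  have "riesz h f = c * top_weight + riesz h r"
    unfolding r_def top_weight_def by (simp add: riesz_diff riesz_smult)
  also have "riesz h r = (\<Sum>a\<in>nodes. weight a * poly f a)"
    using riesz_eq_quadrature[OF \<open>degree r < 2 * p\<close>] by (simp add: r_def poly_top_poly_nodes)
  finally show ?thesis
    unfolding c_def by simp
qed

lemma moment_eq:
  "t \<le> 2 * p \<Longrightarrow> h t = (\<Sum>a\<in>nodes. weight a * a ^ t) + (if t = 2 * p then top_weight else 0)"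
  using riesz_eq_quadrature_top[of "monom 1 t"] by (simp add: riesz_monom degree_monom_eq poly_monom)

end

section \<open>Hankel matrices and their rank\<close>

definition hankel_mat :: "nat \<Rightarrow> (nat \<Rightarrow> real) \<Rightarrow> real mat" where
  "hankel_mat N h = mat N N (\<lambda>(i, j). h (i + j))"

definition poly_of_vec :: "real vec \<Rightarrow> real poly" where
  "poly_of_vec x = (\<Sum>i<dim_vec x. monom (x $ i) i)"

lemma coeff_poly_of_vec: "coeff (poly_of_vec x) k = (if k < dim_vec x then x $ k else 0)"
  unfolding poly_of_vec_def by (simp add: coeff_sum coeff_monom sum.delta')

lemma degree_poly_of_vec: "degree (poly_of_vec x) \<le> dim_vec x - 1"
  unfolding poly_of_vec_def by (rule degree_sum_le) (auto intro: order.trans[OF degree_monom_le])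

lemma poly_of_vec_coeff: "degree w < N \<Longrightarrow> poly_of_vec (vec N (coeff w)) = w"
  by (rule poly_eqI) (auto simp: coeff_poly_of_vec coeff_eq_0)

lemma poly_of_vec_eq_0_iff: "poly_of_vec x = 0 \<longleftrightarrow> x = 0\<^sub>v (dim_vec x)"
  by (auto simp: poly_eq_iff vec_eq_iff coeff_poly_of_vec)

lemma riesz_poly_of_vec_mult_monom:
  "riesz h (poly_of_vec x * monom 1 j) = (\<Sum>i<dim_vec x. x $ i * h (i + j))"
  unfolding poly_of_vec_def by (simp add: sum_distrib_right mult_monom riesz_sum riesz_monom)

lemma riesz_mult_monom: "riesz h (w * monom c j) = c * riesz h (w * monom 1 j)"
proof -
  have "monom c j = smult c (monom 1 j)"
    by (simp add: smult_monom)
  then show ?thesis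
    by (simp add: riesz_smult)
qed

lemma hankel_mat_mult_vec_index:
  assumes "x \<in> carrier_vec N" "j < N"
  shows "(hankel_mat N h *\<^sub>v x) $ j = riesz h (poly_of_vec x * monom 1 j)"
  using assms unfolding riesz_poly_of_vec_mult_monom
  by (simp add: hankel_mat_def scalar_prod_def lessThan_atLeast0 add.commute mult.commute)

lemma hankel_mat_quadratic_form:
  assumes "x \<in> carrier_vec N"
  shows "x \<bullet> (hankel_mat N h *\<^sub>v x) = riesz h (poly_of_vec x * poly_of_vec x)"
proof -
  have "x \<bullet> (hankel_mat N h *\<^sub>v x) = (\<Sum>j<N. riesz h (poly_of_vec x * monom (x $ j) j))"
    using assms hankel_mat_mult_vec_index[OF assms]
    by (simp add: scalar_prod_def lessThan_atLeast0 hankel_mat_def riesz_mult_monom[of h _ "x $ _"])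
  also have "\<dots> = riesz h (\<Sum>j<N. poly_of_vec x * monom (x $ j) j)"
    by (simp only: riesz_sum)
  also have "\<dots> = riesz h (poly_of_vec x * poly_of_vec x)"
    using assms by (simp only: sum_distrib_left[symmetric]) (simp add: poly_of_vec_def[of x])
  finally show ?thesis .
qed

lemma psd_mat_hankel_mat_iff: "psd_mat (hankel_mat (p + 1) h) \<longleftrightarrow> hankel_psd p h"
proof
  assume psd: "psd_mat (hankel_mat (p + 1) h)"
  show "hankel_psd p h"
    unfolding hankel_psd_def
  proof (intro allI impI)
    fix w :: "real poly"
    assume "degree w \<le> p"
    have "vec (p + 1) (coeff w) \<in> carrier_vec (p + 1)"
      by simp
    then have "vec (p + 1) (coeff w) \<bullet> (hankel_mat (p + 1) h *\<^sub>v vec (p + 1) (coeff w)) \<ge> 0"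
      using psd unfolding psd_mat_def by (simp add: hankel_mat_def)
    then show "riesz h (w * w) \<ge> 0"
      using \<open>degree w \<le> p\<close> by (simp add: hankel_mat_quadratic_form poly_of_vec_coeff)
  qed
next
  assume psd: "hankel_psd p h"
  have "(hankel_mat (p + 1) h)\<^sup>T = hankel_mat (p + 1) h"
    by (rule eq_matI) (auto simp: hankel_mat_def add.commute)
  moreover have "x \<bullet> (hankel_mat (p + 1) h *\<^sub>v x) \<ge> 0" if "x \<in> carrier_vec (p + 1)" for x
    using psd that degree_poly_of_vec[of x]
    unfolding hankel_mat_quadratic_form[OF that] hankel_psd_def by simp
  ultimately show "psd_mat (hankel_mat (p + 1) h)"
    unfolding psd_mat_def by (auto simp: hankel_mat_def)
qed

lemma hankel_mat_mult_vec_eq_0_iff: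
  assumes "x \<in> carrier_vec (p + 1)"
  shows "hankel_mat (p + 1) h *\<^sub>v x = 0\<^sub>v (p + 1) \<longleftrightarrow> hankel_kernel p h (poly_of_vec x)"
  using assms degree_poly_of_vec[of x] hankel_mat_mult_vec_index[OF assms]
  by (auto simp: hankel_kernel_def hankel_mat_def vec_eq_iff)

lemma distinct_cols_if_mult_vec_injective:
  fixes C :: "'a::field mat"
  assumes C: "C \<in> carrier_mat n s" and inj: "\<And>y. y \<in> carrier_vec s \<Longrightarrow> C *\<^sub>v y = 0\<^sub>v n \<Longrightarrow> y = 0\<^sub>v s"
  shows "distinct (cols C)"
  unfolding distinct_conv_nth
proof (intro allI impI notI)
  fix k1 k2
  assume k: "k1 < length (cols C)" "k2 < length (cols C)" "k1 \<noteq> k2" "cols C ! k1 = cols C ! k2"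
  define y where "y = (unit_vec s k1 - unit_vec s k2 :: 'a vec)"
  have "C *\<^sub>v y = 0\<^sub>v n"
  proof (rule eq_vecI)
    fix i assume "i < dim_vec (0\<^sub>v n :: 'a vec)"
    then have "C $$ (i, k1) = C $$ (i, k2)"
      using k C by (metis cols_length cols_nth carrier_matD col_def index_vec index_zero_vec(2))
    then show "(C *\<^sub>v y) $ i = 0\<^sub>v n $ i"
      using \<open>i < _\<close> k C by (simp add: y_def scalar_prod_minus_distrib[where n = s] row_def)
  qed (use C in simp)
  then have "y = 0\<^sub>v s"
    by (intro inj) (simp add: y_def)
  then show False
    using k C unfolding y_def by (metis carrier_matD(2) cols_length index_minus_vec(1) index_unit_vec(1)
        index_unit_vec(3) index_zero_vec(1) diff_zero one_neq_zero)
qed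

lemma rank_ge_selected_columns:
  fixes A :: "'a::field mat"
  assumes A: "A \<in> carrier_mat n nc" and sel: "\<And>k. k < s \<Longrightarrow> e k < nc"
    and indpt: "\<And>y. y \<in> carrier_vec s \<Longrightarrow> (\<And>i. i < n \<Longrightarrow> (\<Sum>k<s. y $ k * A $$ (i, e k)) = 0) \<Longrightarrow> y = 0\<^sub>v s"
  shows "s \<le> vec_space.rank n A"
proof -
  interpret V: vec_space "TYPE('a)" n .
  define C where "C = mat n s (\<lambda>(i, k). A $$ (i, e k))"
  have C: "C \<in> carrier_mat n s"
    unfolding C_def by simp
  have inj: "y = 0\<^sub>v s" if y: "y \<in> carrier_vec s" "C *\<^sub>v y = 0\<^sub>v n" for y
  proof (rule indpt[OF y(1)])
    fix i assume "i < n"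
    then have "(C *\<^sub>v y) $ i = (\<Sum>k<s. y $ k * A $$ (i, e k))"
      using y(1) by (simp add: C_def scalar_prod_def lessThan_atLeast0 mult.commute)
    then show "(\<Sum>k<s. y $ k * A $$ (i, e k)) = 0"
      using y(2) \<open>i < n\<close> by simp
  qed
  have col_C: "cols C ! k = cols A ! e k" if "k < s" for k
    using that sel[OF that] A by (auto simp: C_def)
  have "set (cols C) \<subseteq> set (cols A)"
  proof
    fix c assume "c \<in> set (cols C)"
    then obtain k where "k < s" "c = cols C ! k"
      using C by (auto simp: in_set_conv_nth)
    then show "c \<in> set (cols A)"
      using col_C sel A by (metis nth_mem cols_length carrier_matD(2))
  qed
  moreover have distinct: "distinct (cols C)"
    using C inj by (rule distinct_cols_if_mult_vec_injective)
  moreover have "V.lin_indpt (set (cols C))"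
    using V.lin_depE[OF C _ distinct] inj by blast
  ultimately have "card (set (cols C)) \<le> V.rank A"
    by (intro V.rank_ge_card_indpt[OF A])
  then show ?thesis
    using distinct_card[OF distinct] C by simp
qed

lemma hankel_kernel_of_column_relation:
  assumes "\<And>k. k < s \<Longrightarrow> e k \<le> p" and "\<And>j. j \<le> p \<Longrightarrow> (\<Sum>k<s. y $ k * h (e k + j)) = 0"
  shows "hankel_kernel p h (\<Sum>k<s. monom (y $ k) (e k))"
  unfolding hankel_kernel_def
proof (intro conjI allI impI)
  show "degree (\<Sum>k<s. monom (y $ k) (e k)) \<le> p"
    by (intro degree_sum_le) (auto intro: le_trans[OF degree_monom_le assms(1)])
  fix j assume "j \<le> p"
  then show "riesz h ((\<Sum>k<s. monom (y $ k) (e k)) * monom 1 j) = 0"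
    using assms(2) by (simp add: sum_distrib_right mult_monom riesz_sum riesz_monom)
qed

lemma card_le_rank_hankel_mat:
  assumes "J \<subseteq> {..p}"
    and "\<And>w. hankel_kernel p h w \<Longrightarrow> (\<And>i. i \<notin> J \<Longrightarrow> coeff w i = 0) \<Longrightarrow> w = 0"
  shows "card J \<le> vec_space.rank (p + 1) (hankel_mat (p + 1) h)"
proof -
  obtain e where e: "bij_betw e {..<card J} J"
    using ex_bij_betw_nat_finite[of J] finite_subset[OF assms(1)] by (auto simp: lessThan_atLeast0)
  have e_J: "e k \<in> J" if "k < card J" for k
    using e that by (simp add: bij_betwE)
  have e_le: "e k \<le> p" if "k < card J" for k
    using e_J[OF that] assms(1) by auto
  have e_eq_iff: "e k' = e k \<longleftrightarrow> k' = k" if "k' < card J" "k < card J" for k k'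
    using e that by (auto simp: bij_betw_def inj_on_def)
  show ?thesis
  proof (rule rank_ge_selected_columns[where e = e])
    fix y :: "real vec"
    assume y: "y \<in> carrier_vec (card J)"
      and rel: "\<And>j. j < p + 1 \<Longrightarrow> (\<Sum>k<card J. y $ k * hankel_mat (p + 1) h $$ (j, e k)) = 0"
    define w where "w = (\<Sum>k<card J. monom (y $ k) (e k))"
    have coeff_w: "coeff w i = (\<Sum>k<card J. if e k = i then y $ k else 0)" for i
      by (simp add: w_def coeff_sum coeff_monom)
    have "hankel_kernel p h w"
      unfolding w_def
    proof (rule hankel_kernel_of_column_relation)
      fix j assume "j \<le> p"
      then have "(\<Sum>k<card J. y $ k * h (e k + j)) = (\<Sum>k<card J. y $ k * hankel_mat (p + 1) h $$ (j, e k))"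
        using e_le by (intro sum.cong) (simp_all add: hankel_mat_def less_Suc_eq_le add.commute)
      then show "(\<Sum>k<card J. y $ k * h (e k + j)) = 0"
        using rel[of j] \<open>j \<le> p\<close> by simp
    qed (rule e_le)
    moreover have "coeff w i = 0" if "i \<notin> J" for i
      unfolding coeff_w using that e_J by (intro sum.neutral) auto
    ultimately have "w = 0"
      by (rule assms(2))
    have "y $ k = 0" if "k < card J" for k
    proof -
      have "coeff w (e k) = (\<Sum>k'<card J. if k' = k then y $ k' else 0)"
        unfolding coeff_w using that by (intro sum.cong) (simp_all add: e_eq_iff)
      then show ?thesis
        using \<open>w = 0\<close> that by simp
    qed
    then show "y = 0\<^sub>v (card J)"
      using y by (intro eq_vecI) auto
  qed (auto simp: hankel_mat_def less_Suc_eq_le e_le)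
qed

lemma rank_moment_mat_le:
  fixes S :: "real set"
  assumes "finite S"
  shows "vec_space.rank N (mat N N (\<lambda>(i, j). (\<Sum>a\<in>S. \<alpha> a * a ^ i * a ^ j) + (if i = k \<and> j = k then \<beta> else 0)))
    \<le> card S + (if \<beta> = 0 then 0 else 1)"
  using assms
proof (induction S rule: finite_induct)
  case empty
  show ?case
  proof (cases "\<beta> = 0")
    case True
    then have "mat N N (\<lambda>(i, j). (\<Sum>a\<in>{}. \<alpha> a * a ^ i * a ^ j) + (if i = k \<and> j = k then \<beta> else 0)) = 0\<^sub>m N N"
      by (intro eq_matI) auto
    then show ?thesis
      by (simp add: vec_space.rank_0I)
  next
    case False
    have "vec_space.rank N (mat N N (\<lambda>(i, j). (\<Sum>a\<in>{}. \<alpha> a * a ^ i * a ^ j) + (if i = k \<and> j = k then \<beta> else 0))) \<le> 1"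
      by (rule vec_space.rank_le_1_product_entries[where f = "\<lambda>i. if i = k then \<beta> else 0"
            and g = "\<lambda>j. if j = k then 1 else 0"]) auto
    then show ?thesis
      using False by simp
  qed
next
  case (insert a S)
  let ?M = "\<lambda>S. mat N N (\<lambda>(i, j). (\<Sum>a\<in>S. \<alpha> a * a ^ i * a ^ j) + (if i = k \<and> j = k then \<beta> else 0))"
  let ?R = "mat N N (\<lambda>(i, j). \<alpha> a * a ^ i * a ^ j)"
  have "?M (insert a S) = ?R + ?M S"
    using insert by (intro eq_matI) auto
  moreover have "vec_space.rank N (?R + ?M S) \<le> vec_space.rank N ?R + vec_space.rank N (?M S)"
    by (rule vec_space.rank_subadditive) auto
  moreover have "vec_space.rank N ?R \<le> 1"
    by (rule vec_space.rank_le_1_product_entries[where f = "\<lambda>i. \<alpha> a * a ^ i" and g = "\<lambda>j. a ^ j"]) auto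
  ultimately show ?case
    using insert by simp
qed

lemma coeff_mult_at_degree_bounds:
  assumes "degree f \<le> m" "degree g \<le> n"
  shows "coeff (f * g) (m + n) = coeff f m * coeff g n"
proof (cases "degree f = m \<and> degree g = n")
  case True
  then show ?thesis
    using coeff_mult_degree_sum[of f g] by simp
next
  case False
  then have "degree (f * g) < m + n" "coeff f m * coeff g n = 0"
    using assms degree_mult_le[of f g] by (auto simp: coeff_eq_0)
  then show ?thesis
    by (simp add: coeff_eq_0)
qed

lemma exists_solution_if_det_neq_0:
  fixes A :: "'a::field mat"
  assumes "A \<in> carrier_mat n n" "det A \<noteq> 0" "b \<in> carrier_vec n"
  obtains x where "x \<in> carrier_vec n" "A *\<^sub>v x = b"
proof -
  obtain B where B: "B \<in> carrier_mat n n" "A * B = 1\<^sub>m n"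
    using det_non_zero_imp_unit[OF assms(1,2), of undefined] unfolding Units_def ring_mat_def by auto
  have "A *\<^sub>v (B *\<^sub>v b) = b"
    using assms(1,3) B by (simp add: assoc_mult_mat_vec[symmetric, of _ n n _ n])
  then show ?thesis
    using B assms(3) by (intro that[of "B *\<^sub>v b"]) auto
qed

lemma det_hankel_mat_neq_0:
  assumes "\<And>w. hankel_kernel p h w \<Longrightarrow> w = 0"
  shows "det (hankel_mat (p + 1) h) \<noteq> 0"
proof
  assume "det (hankel_mat (p + 1) h) = 0"
  moreover have "hankel_mat (p + 1) h \<in> carrier_mat (p + 1) (p + 1)"
    by (simp add: hankel_mat_def)
  ultimately obtain x where "x \<in> carrier_vec (p + 1)" "x \<noteq> 0\<^sub>v (p + 1)"
    "hankel_mat (p + 1) h *\<^sub>v x = 0\<^sub>v (p + 1)"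
    using det_0_iff_vec_prod_zero by blast
  then show False
    using assms hankel_mat_mult_vec_eq_0_iff poly_of_vec_eq_0_iff by fastforce
qed

context hankel_min_kernel
begin

lemma hankel_mat_eq_moment_mat:
  "hankel_mat (p + 1) h = mat (p + 1) (p + 1)
     (\<lambda>(i, j). (\<Sum>a\<in>nodes. weight a * a ^ i * a ^ j) + (if i = p \<and> j = p then top_weight else 0))"
  using moment_eq by (intro eq_matI) (auto simp: hankel_mat_def power_add mult.assoc)

lemma kernel_eq_0_if_high_coeffs_eq_0:
  assumes "hankel_kernel p h w" "\<And>i. degree q \<le> i \<Longrightarrow> coeff w i = 0"
  shows "w = 0"
proof (rule ccontr)
  assume "w \<noteq> 0"
  then have "degree w < degree q"
    using assms(2)[of "degree w"] by fastforce
  then show False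
    using minimal[OF assms(1) \<open>w \<noteq> 0\<close>] by simp
qed

lemma card_nodes_le_rank: "card nodes \<le> vec_space.rank (p + 1) (hankel_mat (p + 1) h)"
proof -
  have "card {..<degree q} \<le> vec_space.rank (p + 1) (hankel_mat (p + 1) h)"
  proof (rule card_le_rank_hankel_mat)
    fix w assume "hankel_kernel p h w" "\<And>i. i \<notin> {..<degree q} \<Longrightarrow> coeff w i = 0"
    then show "w = 0"
      by (intro kernel_eq_0_if_high_coeffs_eq_0) auto
  qed (use degree_q_le in auto)
  then show ?thesis
    using card_nodes by simp
qed

text \<open>The top weight detects the coefficient of \<open>X\<^sup>p\<close> of kernel elements through \<open>riesz h (w * top_poly)\<close>.\<close>
lemma top_weight_mult_coeff_kernel:
  assumes "hankel_kernel p h w"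
  shows "top_weight * coeff w p = 0"
proof -
  have deg_w: "degree w \<le> p"
    using assms hankel_kernel_def by blast
  have "0 = riesz h (w * top_poly)"
    using assms degree_top_poly by (simp add: riesz_kernel_mult)
  also have "\<dots> = top_weight * coeff (w * top_poly) (2 * p)"
    using degree_mult_le[of w top_poly] deg_w degree_top_poly
    by (simp add: riesz_eq_quadrature_top poly_top_poly_nodes)
  also have "coeff (w * top_poly) (2 * p) = coeff w p"
    using coeff_mult_at_degree_bounds[OF deg_w, of top_poly p] degree_top_poly lead_coeff_top_poly
    by (simp add: mult_2)
  finally show ?thesis
    by simp
qed

lemma card_nodes_Suc_le_rank:
  assumes "top_weight \<noteq> 0"
  shows "card nodes + 1 \<le> vec_space.rank (p + 1) (hankel_mat (p + 1) h)"
proof -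
  have "degree q < p"
    using assms top_weight_eq_0 degree_q_le by fastforce
  have "card (insert p {..<degree q}) \<le> vec_space.rank (p + 1) (hankel_mat (p + 1) h)"
  proof (rule card_le_rank_hankel_mat)
    fix w assume w: "hankel_kernel p h w" "\<And>i. i \<notin> insert p {..<degree q} \<Longrightarrow> coeff w i = 0"
    have "coeff w p = 0"
      using top_weight_mult_coeff_kernel[OF w(1)] assms by simp
    have "coeff w i = 0" if "degree q \<le> i" for i
    proof (cases "i = p")
      case True
      then show ?thesis
        using \<open>coeff w p = 0\<close> by simp
    next
      case False
      then have "i \<notin> insert p {..<degree q}"
        using that by simp
      then show ?thesis
        by (rule w(2))
    qed
    then show "w = 0"
      by (rule kernel_eq_0_if_high_coeffs_eq_0[OF w(1)])
  qed (use degree_q_le in auto)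
  then show ?thesis
    using card_nodes \<open>degree q < p\<close> by simp
qed

lemma rank_hankel_mat:
  "vec_space.rank (p + 1) (hankel_mat (p + 1) h) = card nodes + (if top_weight = 0 then 0 else 1)"
proof -
  have "vec_space.rank (p + 1) (hankel_mat (p + 1) h) \<le> card nodes + (if top_weight = 0 then 0 else 1)"
    unfolding hankel_mat_eq_moment_mat using finite_nodes by (rule rank_moment_mat_le)
  then show ?thesis
    using card_nodes_le_rank card_nodes_Suc_le_rank by (cases "top_weight = 0") auto
qed

end

section \<open>Vandermonde decompositions of positive semidefinite Hankel matrices\<close>

lemma hankel_min_kernel_exists:
  assumes "hankel_psd p h" "1 \<le> p" "hankel_kernel p h w" "w \<noteq> 0"
  shows "\<exists>q. hankel_min_kernel p h q"
proof -
  obtain q0 where q0: "hankel_kernel p h q0" "q0 \<noteq> 0"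
    and min: "\<And>w. hankel_kernel p h w \<and> w \<noteq> 0 \<Longrightarrow> degree q0 \<le> degree w"
    using ex_has_least_nat[of "\<lambda>w. hankel_kernel p h w \<and> w \<noteq> 0" w degree] assms(3,4) by blast
  have "hankel_min_kernel p h (smult (1 / lead_coeff q0) q0)"
    using assms(1,2) q0 min by unfold_locales (auto simp: hankel_kernel_smult)
  then show ?thesis ..
qed

text \<open>
  For a positive definite Hankel matrix, the sequence is prolonged by one moment so that
  \<open>X\<^sup>p\<^sup>+\<^sup>1 + poly_of_vec a\<close>, with \<open>a\<close> solving the Hankel system for the next column, lies in the
  kernel of the enlarged Hankel matrix.
\<close>
lemma hankel_kernel_extension:
  assumes "\<And>w. hankel_kernel p h w \<Longrightarrow> w = 0"
  obtains h' q where "\<And>t. t \<le> 2 * p + 1 \<Longrightarrow> h' t = h t" "hankel_kernel (p + 1) h' q"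
    "degree q = p + 1" "lead_coeff q = 1"
proof -
  obtain a where a: "a \<in> carrier_vec (p + 1)"
    "hankel_mat (p + 1) h *\<^sub>v a = - vec (p + 1) (\<lambda>j. h (p + 1 + j))"
    using exists_solution_if_det_neq_0[OF _ det_hankel_mat_neq_0[OF assms]]
    by (metis hankel_mat_def mat_carrier uminus_carrier_vec vec_carrier)
  define h' where "h' t = (if t = 2 * p + 2 then - (\<Sum>i<p + 1. a $ i * h (i + (p + 1))) else h t)" for t
  define q where "q = monom 1 (p + 1) + poly_of_vec a"
  have deg_a: "degree (poly_of_vec a) < p + 1"
    using degree_poly_of_vec[of a] a(1) by simp
  have "degree q = p + 1"
    unfolding q_def using deg_a by (subst degree_add_eq_left) (simp_all add: degree_monom_eq)
  moreover have "coeff q (p + 1) = 1"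
    unfolding q_def using deg_a by (simp add: coeff_eq_0)
  then have "lead_coeff q = 1"
    using \<open>degree q = p + 1\<close> by simp
  moreover have "hankel_kernel (p + 1) h' q"
    unfolding hankel_kernel_def
  proof (intro conjI allI impI)
    fix j assume "j \<le> p + 1"
    have "riesz h' (q * monom 1 j) = h' (p + 1 + j) + (\<Sum>i<p + 1. a $ i * h' (i + j))"
      using a(1) by (simp add: q_def distrib_right riesz_add mult_monom riesz_monom riesz_poly_of_vec_mult_monom)
    also have "\<dots> = 0"
    proof (cases "j = p + 1")
      case False
      then have "j < p + 1"
        using \<open>j \<le> p + 1\<close> by simp
      have "(\<Sum>i<p + 1. a $ i * h' (i + j)) = (\<Sum>i<p + 1. a $ i * h (i + j))"
        using \<open>j < p + 1\<close> by (intro sum.cong) (simp_all add: h'_def)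
      also have "\<dots> = (hankel_mat (p + 1) h *\<^sub>v a) $ j"
        using hankel_mat_mult_vec_index[OF a(1) \<open>j < p + 1\<close>] a(1)
        by (simp add: riesz_poly_of_vec_mult_monom)
      also have "\<dots> = - h (p + 1 + j)"
        using \<open>j < p + 1\<close> unfolding a(2) by simp
      finally show ?thesis
        using \<open>j < p + 1\<close> by (simp add: h'_def)
    qed (auto simp: h'_def)
    finally show "riesz h' (q * monom 1 j) = 0" .
  qed (use \<open>degree q = p + 1\<close> in simp)
  moreover have "h' t = h t" if "t \<le> 2 * p + 1" for t
    using that by (simp add: h'_def)
  ultimately show ?thesis
    using that by blast
qed

text \<open>
  Every \<open>w\<close> of degree \<open>\<le> p + 1\<close> is \<open>c q + r\<close> with \<open>degree r \<le> p\<close>; since \<open>q\<close> is in the kernel,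
  \<open>riesz h' (w\<^sup>2) = riesz h (r\<^sup>2)\<close>.
\<close>
lemma hankel_psd_extension:
  assumes psd: "hankel_psd p h" and agree: "\<And>t. t \<le> 2 * p \<Longrightarrow> h' t = h t"
    and kernel: "hankel_kernel (p + 1) h' q" and deg: "degree q = p + 1" and monic: "lead_coeff q = 1"
  shows "hankel_psd (p + 1) h'"
  unfolding hankel_psd_def
proof (intro allI impI)
  fix w :: "real poly"
  assume dw: "degree w \<le> p + 1"
  define c where "c = coeff w (p + 1)"
  define r where "r = w - smult c q"
  have "degree r \<le> p + 1"
    unfolding r_def using dw degree_smult_le[of c q] deg by (intro degree_diff_le) simp_all
  moreover have "coeff r (p + 1) = 0"
    unfolding r_def c_def using deg monic by simp
  ultimately have dr: "degree r \<le> p"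
  proof (cases "degree r = p + 1")
    case True
    then have "r = 0"
      using \<open>coeff r (p + 1) = 0\<close> by (metis leading_coeff_0_iff)
    with True show ?thesis
      by simp
  qed simp
  have "w = r + smult c q"
    by (simp add: r_def)
  then have sq: "w * w = r * r + smult c (r * q) + smult c (r * q) + smult (c * c) (q * q)"
    by (simp add: algebra_simps)
  have "riesz h' (q * r) = 0" "riesz h' (q * q) = 0"
    using riesz_kernel_mult[OF kernel] deg dr by simp_all
  then have "riesz h' (w * w) = riesz h' (r * r)"
    unfolding sq riesz_add riesz_smult by (simp add: mult.commute)
  also have "\<dots> = riesz h (r * r)"
    using dr degree_mult_le[of r r] by (intro riesz_cong[of _ "2 * p"]) (auto simp: agree)
  finally show "riesz h' (w * w) \<ge> 0"
    using psd dr unfolding hankel_psd_def by simp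
qed

lemma hankel_min_kernel_of_extension:
  assumes psd: "hankel_psd p h" and "1 \<le> p" and trivial: "\<And>w. hankel_kernel p h w \<Longrightarrow> w = 0"
    and agree: "\<And>t. t \<le> 2 * p \<Longrightarrow> h' t = h t" and kernel: "hankel_kernel (p + 1) h' q"
    and deg: "degree q = p + 1" and monic: "lead_coeff q = 1"
  shows "hankel_min_kernel (p + 1) h' q"
proof
  show "hankel_psd (p + 1) h'"
    using psd agree kernel deg monic by (rule hankel_psd_extension)
  show "degree q \<le> degree w" if w: "hankel_kernel (p + 1) h' w" "w \<noteq> 0" for w
  proof (rule ccontr)
    assume "\<not> degree q \<le> degree w"
    then have "degree w \<le> p"
      using deg by simp
    moreover have "riesz h (w * w) = riesz h' (w * w)"
      using \<open>degree w \<le> p\<close> degree_mult_le[of w w] by (intro riesz_cong[of _ "2 * p"]) (auto simp: agree)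
    ultimately have "hankel_kernel p h w"
      using riesz_kernel_mult[OF w(1), of w] by (intro hankel_kernelI[OF psd]) auto
    then show False
      using trivial w(2) by blast
  qed
qed (use assms in auto)

theorem hankel_psd_imp_decomposition:
  assumes "1 \<le> p" "hankel_psd p h"
  shows "\<exists>S \<alpha> \<beta>. finite S \<and> (\<forall>a\<in>S. \<alpha> a > 0) \<and> \<beta> \<ge> 0 \<and>
    (\<forall>t\<le>2 * p. h t = (\<Sum>a\<in>S. \<alpha> a * a ^ t) + (if t = 2 * p then \<beta> else 0)) \<and>
    vec_space.rank (p + 1) (hankel_mat (p + 1) h) = card S + (if \<beta> = 0 then 0 else 1)"
proof (cases "\<exists>w. hankel_kernel p h w \<and> w \<noteq> 0")
  case True
  then obtain q where "hankel_min_kernel p h q"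
    using hankel_min_kernel_exists[OF assms(2,1)] by blast
  then interpret hankel_min_kernel p h q .
  show ?thesis
    using finite_nodes weight_pos top_weight_nonneg moment_eq rank_hankel_mat by blast
next
  case False
  then have trivial: "\<And>w. hankel_kernel p h w \<Longrightarrow> w = 0"
    by blast
  obtain h' q where agree: "\<And>t. t \<le> 2 * p + 1 \<Longrightarrow> h' t = h t"
    and q: "hankel_kernel (p + 1) h' q" "degree q = p + 1" "lead_coeff q = 1"
    using hankel_kernel_extension[OF trivial] by blast
  interpret Q: hankel_min_kernel "p + 1" h' q
    using hankel_min_kernel_of_extension[OF assms(2,1) trivial _ q] agree by simp
  have "h t = (\<Sum>a\<in>Q.nodes. Q.weight a * a ^ t) + (if t = 2 * p then 0 else 0)" if "t \<le> 2 * p" for t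
    using that Q.moment_eq[of t] agree[of t] by simp
  moreover have "vec_space.rank (p + 1) (hankel_mat (p + 1) h) = card Q.nodes"
    using vec_space.det_rank_iff[of "hankel_mat (p + 1) h" "p + 1"] det_hankel_mat_neq_0[OF trivial]
      Q.card_nodes q(2) by (simp add: hankel_mat_def)
  ultimately show ?thesis
    using Q.finite_nodes Q.weight_pos by (intro exI[of _ Q.nodes] exI[of _ Q.weight] exI[of _ 0]) auto
qed

lemma riesz_of_moments:
  assumes "finite I" "degree f \<le> 2 * p"
    and "\<And>t. t \<le> 2 * p \<Longrightarrow> h t = (\<Sum>k\<in>I. \<alpha> k * \<xi> k ^ t) + (if t = 2 * p then \<beta> else 0)"
  shows "riesz h f = (\<Sum>k\<in>I. \<alpha> k * poly f (\<xi> k)) + \<beta> * coeff f (2 * p)"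
proof -
  have poly_f: "poly f x = (\<Sum>i\<le>2 * p. coeff f i * x ^ i)" for x
    unfolding poly_altdef using assms(2) by (intro sum.mono_neutral_left) (auto simp: coeff_eq_0)
  have "riesz h f = (\<Sum>i\<le>2 * p. coeff f i * h i)"
    by (rule riesz_altdef[OF assms(2)])
  also have "\<dots> = (\<Sum>i\<le>2 * p. (\<Sum>k\<in>I. \<alpha> k * (coeff f i * \<xi> k ^ i)) + (if i = 2 * p then \<beta> * coeff f i else 0))"
    using assms(3) by (intro sum.cong) (simp_all add: sum_distrib_left algebra_simps)
  also have "\<dots> = (\<Sum>k\<in>I. \<Sum>i\<le>2 * p. \<alpha> k * (coeff f i * \<xi> k ^ i)) + \<beta> * coeff f (2 * p)"
    by (simp add: sum.distrib sum.swap[of _ "{..2 * p}" I])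
  also have "\<dots> = (\<Sum>k\<in>I. \<alpha> k * poly f (\<xi> k)) + \<beta> * coeff f (2 * p)"
    by (simp add: poly_f sum_distrib_left)
  finally show ?thesis .
qed

theorem hankel_psd_of_decomposition:
  assumes "finite I" "\<forall>k\<in>I. \<alpha> k \<ge> 0" "\<beta> \<ge> 0"
    and "\<And>t. t \<le> 2 * p \<Longrightarrow> h t = (\<Sum>k\<in>I. \<alpha> k * \<xi> k ^ t) + (if t = 2 * p then \<beta> else 0)"
  shows "hankel_psd p h"
  unfolding hankel_psd_def
proof (intro allI impI)
  fix w :: "real poly"
  assume "degree w \<le> p"
  then have "degree (w * w) \<le> 2 * p" "coeff (w * w) (2 * p) = coeff w p * coeff w p"
    using degree_mult_le[of w w] coeff_mult_at_degree_bounds[of w p w p] by (auto simp: mult_2)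
  then show "riesz h (w * w) \<ge> 0"
    using riesz_of_moments[OF assms(1) _ assms(4)] assms(2,3) by (simp add: sum_nonneg)
qed

lemma weighted_power_sums_reindex:
  fixes S :: "real set"
  assumes "finite S" "\<forall>a\<in>S. \<alpha> a > 0"
  obtains \<xi> where "\<forall>k\<in>{1..card S}. \<alpha> (\<xi> k) > 0"
    "\<And>t. (\<Sum>a\<in>S. \<alpha> a * a ^ t) = (\<Sum>k=1..card S. \<alpha> (\<xi> k) * \<xi> k ^ t)"
proof -
  obtain \<xi> where \<xi>: "bij_betw \<xi> {1..card S} S"
    using ex_bij_betw_nat_finite_1[OF assms(1)] by blast
  show ?thesis
  proof (rule that)
    show "\<forall>k\<in>{1..card S}. \<alpha> (\<xi> k) > 0"
      using \<xi> assms(2) by (auto dest: bij_betwE)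
    show "(\<Sum>a\<in>S. \<alpha> a * a ^ t) = (\<Sum>k=1..card S. \<alpha> (\<xi> k) * \<xi> k ^ t)" for t
      by (rule sum.reindex_bij_betw[OF \<xi>, symmetric])
  qed
qed

theorem hankel_psd_iff_vandermonde:
  fixes p :: nat and h :: "nat \<Rightarrow> real"
  assumes "1 \<le> p"
  defines "r \<equiv> vec_space.rank (p + 1) (hankel_mat (p + 1) h)"
  shows "hankel_psd p h \<longleftrightarrow>
    (\<exists>\<alpha> \<xi> :: nat \<Rightarrow> real. (\<forall>k\<in>{1..r}. \<alpha> k > 0) \<and> (\<forall>t\<le>2 * p. h t = (\<Sum>k=1..r. \<alpha> k * \<xi> k ^ t))) \<or>
    (\<exists>\<alpha> \<xi> :: nat \<Rightarrow> real. r \<ge> 1 \<and> (\<forall>k\<in>{1..r}. \<alpha> k > 0) \<and>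
       (\<forall>t\<le>2 * p. h t = (\<Sum>k=1..r-1. \<alpha> k * \<xi> k ^ t) + (if t = 2 * p then \<alpha> r else 0)))"
    (is "_ \<longleftrightarrow> ?vandermonde \<or> ?augmented")
proof
  assume "hankel_psd p h"
  from hankel_psd_imp_decomposition[OF assms(1) this]
  obtain S \<alpha> \<beta> where S: "finite S" "\<forall>a\<in>S. \<alpha> a > 0" "\<beta> \<ge> 0"
    and moments: "\<forall>t\<le>2 * p. h t = (\<Sum>a\<in>S. \<alpha> a * a ^ t) + (if t = 2 * p then \<beta> else 0)"
    and rank: "r = card S + (if \<beta> = 0 then 0 else 1)"
    unfolding r_def by (elim exE conjE)
  obtain \<xi> where \<alpha>_pos: "\<forall>k\<in>{1..card S}. \<alpha> (\<xi> k) > 0"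
    and reindex: "\<And>t. (\<Sum>a\<in>S. \<alpha> a * a ^ t) = (\<Sum>k=1..card S. \<alpha> (\<xi> k) * \<xi> k ^ t)"
    using weighted_power_sums_reindex[OF S(1,2)] by blast
  show "?vandermonde \<or> ?augmented"
  proof (cases "\<beta> = 0")
    case True
    then have "(\<forall>k\<in>{1..r}. \<alpha> (\<xi> k) > 0) \<and> (\<forall>t\<le>2 * p. h t = (\<Sum>k=1..r. \<alpha> (\<xi> k) * \<xi> k ^ t))"
      using rank moments \<alpha>_pos by (simp add: reindex)
    then show ?thesis
      by (intro disjI1 exI[of _ "\<lambda>k. \<alpha> (\<xi> k)"] exI[of _ \<xi>])
  next
    case False
    then have r: "r = card S + 1"
      using rank by simp
    define \<alpha>' where "\<alpha>' k = (if k = r then \<beta> else \<alpha> (\<xi> k))" for k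
    have "(\<Sum>k=1..r-1. \<alpha>' k * \<xi> k ^ t) = (\<Sum>a\<in>S. \<alpha> a * a ^ t)" for t
      unfolding reindex r by (intro sum.cong) (simp_all add: \<alpha>'_def r)
    moreover have "\<alpha>' k > 0" if "k \<in> {1..r}" for k
      using that False S(3) \<alpha>_pos unfolding r by (cases "k = r") (auto simp: \<alpha>'_def r)
    ultimately have "r \<ge> 1 \<and> (\<forall>k\<in>{1..r}. \<alpha>' k > 0) \<and>
        (\<forall>t\<le>2 * p. h t = (\<Sum>k=1..r-1. \<alpha>' k * \<xi> k ^ t) + (if t = 2 * p then \<alpha>' r else 0))"
      using moments by (simp add: \<alpha>'_def r)
    then show ?thesis
      by (intro disjI2 exI[of _ \<alpha>'] exI[of _ \<xi>])
  qed
next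
  assume "?vandermonde \<or> ?augmented"
  then show "hankel_psd p h"
  proof (elim disjE exE conjE)
    fix \<alpha> \<xi> :: "nat \<Rightarrow> real"
    assume "\<forall>k\<in>{1..r}. \<alpha> k > 0" "\<forall>t\<le>2 * p. h t = (\<Sum>k=1..r. \<alpha> k * \<xi> k ^ t)"
    then show "hankel_psd p h"
      by (intro hankel_psd_of_decomposition[of "{1..r}" \<alpha> 0 p h \<xi>]) (auto intro: less_imp_le)
  next
    fix \<alpha> \<xi> :: "nat \<Rightarrow> real"
    assume "r \<ge> 1" "\<forall>k\<in>{1..r}. \<alpha> k > 0"
      "\<forall>t\<le>2 * p. h t = (\<Sum>k=1..r-1. \<alpha> k * \<xi> k ^ t) + (if t = 2 * p then \<alpha> r else 0)"
    then show "hankel_psd p h"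
      by (intro hankel_psd_of_decomposition[of "{1..r-1}" \<alpha> "\<alpha> r" p h \<xi>]) (auto intro: less_imp_le)
  qed
qed

section \<open>Hankel tensors\<close>

lemma tensor_idx_sum_le: "i \<in> tensor_idx m n \<Longrightarrow> (\<Sum>j<m. i j) \<le> m * (n - 1)"
  using sum_mono[of "{..<m}" i "\<lambda>_. n - 1"] by (force simp: tensor_idx_def)

lemma tensor_idx_sum_exists:
  assumes "1 \<le> n" "t \<le> m * (n - 1)"
  shows "\<exists>i\<in>tensor_idx m n. (\<Sum>j<m. i j) = t"
  using assms(2)
proof (induction m arbitrary: t)
  case 0
  then show ?case
    by (auto simp: tensor_idx_def)
next
  case (Suc m)
  define l where "l = min t (n - 1)"
  have "t - l \<le> m * (n - 1)"
    using Suc.prems unfolding l_def by (auto simp: min_def)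
  then obtain i where i: "i \<in> tensor_idx m n" "(\<Sum>j<m. i j) = t - l"
    using Suc.IH by blast
  have "(\<Sum>j<m. (i(m := l)) j) = (\<Sum>j<m. i j)"
    by (intro sum.cong) auto
  then have "(\<Sum>j<Suc m. (i(m := l)) j) = (\<Sum>j<m. i j) + l"
    by simp
  moreover have "i(m := l) \<in> tensor_idx (Suc m) n"
    using i(1) assms(1) unfolding tensor_idx_def l_def by (auto simp: less_Suc_eq)
  ultimately show ?case
    using i(2) unfolding l_def by (metis le_add_diff_inverse2 min.cobounded1)
qed

lemma rank1_tensor_vand_vec: "rank1_tensor m (vand_vec x) i = x ^ (\<Sum>j<m. i j)"
  by (simp add: rank1_tensor_def vand_vec_def power_sum)

lemma rank1_tensor_e_last:
  assumes "i \<in> tensor_idx m n"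
  shows "rank1_tensor m (e_last n) i = (if (\<Sum>j<m. i j) = m * (n - 1) then 1 else 0)"
proof (cases "\<forall>j<m. i j = n - 1")
  case True
  then show ?thesis
    by (simp add: rank1_tensor_def e_last_def)
next
  case False
  then obtain j0 where j0: "j0 < m" "i j0 \<noteq> n - 1"
    by blast
  then have "(\<Sum>j<m. i j) < (\<Sum>j<m. n - 1)"
    using assms by (intro sum_strict_mono_ex1) (force simp: tensor_idx_def)+
  moreover have "rank1_tensor m (e_last n) i = 0"
    unfolding rank1_tensor_def e_last_def using j0 by (intro prod_zero) auto
  ultimately show ?thesis
    by simp
qed

lemma hankel_tensor_eq_iff:
  assumes "1 \<le> n" and "\<And>i. i \<in> tensor_idx m n \<Longrightarrow> G i = g (\<Sum>j<m. i j)"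
  shows "(\<forall>i\<in>tensor_idx m n. hankel_tensor m h i = G i) \<longleftrightarrow> (\<forall>t\<le>m * (n - 1). h t = g t)"
  using assms tensor_idx_sum_le tensor_idx_sum_exists[OF assms(1)] unfolding hankel_tensor_def by metis

theorem theorem4:
  fixes m n :: nat and h :: "nat \<Rightarrow> real"
  assumes "m \<ge> 2" and "n \<ge> 2" and "even (m * (n - 1))"
  defines "r \<equiv> mat_rank (hankel_matrix m n h)"
  shows "strong_hankel m n h \<longleftrightarrow>
    ((\<exists>\<alpha> \<xi> :: nat \<Rightarrow> real. (\<forall>k\<in>{1..r}. \<alpha> k > 0) \<and>
        (\<forall>i\<in>tensor_idx m n. hankel_tensor m h i =
            (\<Sum>k=1..r. \<alpha> k * rank1_tensor m (vand_vec (\<xi> k)) i)))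
     \<or>
     (\<exists>\<alpha> \<xi> :: nat \<Rightarrow> real. r \<ge> 1 \<and> (\<forall>k\<in>{1..r}. \<alpha> k > 0) \<and>
        (\<forall>i\<in>tensor_idx m n. hankel_tensor m h i =
            (\<Sum>k=1..r-1. \<alpha> k * rank1_tensor m (vand_vec (\<xi> k)) i)
            + \<alpha> r * rank1_tensor m (e_last n) i)))"
proof -
  define p where "p = m * (n - 1) div 2"
  have p: "m * (n - 1) = 2 * p"
    using assms(3) unfolding p_def by simp
  moreover have "2 * 1 \<le> m * (n - 1)"
    using assms(1,2) by (intro mult_mono) auto
  ultimately have "1 \<le> p"
    by simp
  have H: "hankel_matrix m n h = hankel_mat (p + 1) h"
    unfolding hankel_matrix_def hankel_mat_def hankel_size_def p_def by simp
  have "r = vec_space.rank (p + 1) (hankel_mat (p + 1) h)"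
    unfolding r_def mat_rank_def H by (simp add: hankel_mat_def)
  moreover have "strong_hankel m n h \<longleftrightarrow> hankel_psd p h"
    unfolding strong_hankel_def H by (rule psd_mat_hankel_mat_iff)
  moreover have "(\<forall>i\<in>tensor_idx m n. hankel_tensor m h i = (\<Sum>k=1..r. \<alpha> k * rank1_tensor m (vand_vec (\<xi> k)) i))
      \<longleftrightarrow> (\<forall>t\<le>2 * p. h t = (\<Sum>k=1..r. \<alpha> k * \<xi> k ^ t))" for \<alpha> \<xi>
    unfolding p[symmetric] using assms(2) by (intro hankel_tensor_eq_iff) (simp_all add: rank1_tensor_vand_vec)
  moreover have "(\<forall>i\<in>tensor_idx m n. hankel_tensor m h i =
        (\<Sum>k=1..r-1. \<alpha> k * rank1_tensor m (vand_vec (\<xi> k)) i) + \<alpha> r * rank1_tensor m (e_last n) i)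
      \<longleftrightarrow> (\<forall>t\<le>2 * p. h t = (\<Sum>k=1..r-1. \<alpha> k * \<xi> k ^ t) + (if t = 2 * p then \<alpha> r else 0))" for \<alpha> \<xi>
    unfolding p[symmetric] using assms(2)
    by (intro hankel_tensor_eq_iff) (simp_all add: rank1_tensor_vand_vec rank1_tensor_e_last)
  ultimately show ?thesis
    using hankel_psd_iff_vandermonde[OF \<open>1 \<le> p\<close>, of h] by simp
qed

end
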